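(* Let $G$ be a bipartite graph with color classes $E$ and $V$, and let the splitting $V\cup E=S\cup T$ induce a non-empty directed cut $C$ of $G$. Then the root polytope $Q_G$ has a supporting hyperplane which contains none of the vertices of $Q_G$ corresponding to edges in $C$ but contains all other vertices of $Q_G$.
   Context: Bipartite graphs have no multiple edges. $Q_G\subset\mathbf R^E\oplus\mathbf R^V$ is the convex hull of the points $\mathbf i_{\{e\}}+\mathbf i_{\{v\}}$ over edges $ev$ of $G$ ($\mathbf i$ = indicator vector); the vertex $\mathbf i_{\{e\}}+\mathbf i_{\{v\}}$ corresponds to the edge $ev$. The cut induced by a splitting $V\cup E=S\cup T$ into disjoint sets is the set of edges between $S$ and $T$; it is directed if $G$ has no edges between $E\cap S$ and $V\cap T$. *)

theory Defs
  imports "HOL-Analysis.Analysis"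
begin

text \<open>A bipartite graph with colour classes E and V on a finite vertex type 'a
  (E and V partition UNIV, so real^'a is R^E (+) R^V); its edge set is a set
  of pairs (e,v) with e in E and v in V (no multiple edges).\<close>

definition bipartite_graph :: "'a::finite set \<Rightarrow> 'a set \<Rightarrow> ('a \<times> 'a) set \<Rightarrow> bool" where
  "bipartite_graph E V G \<longleftrightarrow> E \<inter> V = {} \<and> E \<union> V = UNIV \<and> G \<subseteq> E \<times> V"

definition ind :: "'a::finite set \<Rightarrow> real ^ 'a" where
  "ind A = (\<chi> i. if i \<in> A then 1 else 0)"

definition root_vertex :: "'a::finite \<times> 'a \<Rightarrow> real ^ 'a" where
  "root_vertex ev = ind {fst ev} + ind {snd ev}"

definition root_polytope :: "('a::finite \<times> 'a) set \<Rightarrow> (real ^ 'a) set" where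
  "root_polytope G = convex hull (root_vertex ` G)"

definition cut_of :: "('a \<times> 'a) set \<Rightarrow> 'a set \<Rightarrow> 'a set \<Rightarrow> ('a \<times> 'a) set" where
  "cut_of G S T = {(e, v) \<in> G. (e \<in> S \<and> v \<in> T) \<or> (e \<in> T \<and> v \<in> S)}"

definition is_splitting :: "'a set \<Rightarrow> 'a set \<Rightarrow> 'a set \<Rightarrow> 'a set \<Rightarrow> bool" where
  "is_splitting E V S T \<longleftrightarrow> S \<union> T = E \<union> V \<and> S \<inter> T = {}"

definition directed_splitting :: "'a set \<Rightarrow> 'a set \<Rightarrow> ('a \<times> 'a) set \<Rightarrow> 'a set \<Rightarrow> 'a set \<Rightarrow> bool" where
  "directed_splitting E V G S T \<longleftrightarrow> \<not> (\<exists>(e, v) \<in> G. e \<in> E \<inter> S \<and> v \<in> V \<inter> T)"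

definition supporting_hyperplane :: "real ^ 'a \<Rightarrow> real \<Rightarrow> (real ^ 'a) set \<Rightarrow> bool" where
  "supporting_hyperplane a b P \<longleftrightarrow> a \<noteq> 0 \<and> (\<forall>x \<in> P. a \<bullet> x \<le> b)"

end

theory Submission
  imports Defs
begin

text \<open>Take the linear functional that is \<open>1\<close> on \<open>E \<inter> S\<close>, \<open>-1\<close> on \<open>V \<inter> S\<close> and \<open>0\<close> on \<open>T\<close>. Since the cut is
  directed, an edge with \<open>e \<in> S\<close> has \<open>v \<in> S\<close> and gets \<open>1 - 1 = 0\<close>; an edge inside \<open>T\<close>
  gets \<open>0\<close>; the remaining edges, with \<open>e \<in> T\<close> and \<open>v \<in> S\<close>, are exactly the cut edges and
  get \<open>-1\<close>. So the functional is at most \<open>0\<close> on \<open>Q\<^sub>G\<close>, and the hyperplane where it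
  vanishes is the required one.\<close>

lemma ind_component [simp]: "ind A $ i = (if i \<in> A then 1 else 0)"
  by (simp add: ind_def)

lemma inner_ind_singleton: "(a :: real ^ 'a::finite) \<bullet> ind {i} = a $ i"
proof -
  have "a \<bullet> ind {i} = (\<Sum>j\<in>UNIV. a $ j * (if j = i then 1 else 0))"
    by (simp add: inner_vec_def)
  also have "\<dots> = a $ i"
    by (simp add: if_distrib cong: if_cong)
  finally show ?thesis .
qed

lemma inner_root_vertex: "a \<bullet> root_vertex ev = a $ fst ev + a $ snd ev"
  by (simp add: root_vertex_def inner_add_right inner_ind_singleton)

lemma root_polytope_halfspace_le:
  assumes "\<And>ev. ev \<in> G \<Longrightarrow> a \<bullet> root_vertex ev \<le> b"
  shows "x \<in> root_polytope G \<Longrightarrow> a \<bullet> x \<le> b"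
proof -
  have "root_vertex ` G \<subseteq> {x. a \<bullet> x \<le> b}"
    using assms by auto
  then have "root_polytope G \<subseteq> {x. a \<bullet> x \<le> b}"
    unfolding root_polytope_def by (rule hull_minimal) (rule convex_halfspace_le)
  then show "x \<in> root_polytope G \<Longrightarrow> a \<bullet> x \<le> b"
    by blast
qed

definition cut_normal :: "'a::finite set \<Rightarrow> 'a set \<Rightarrow> 'a set \<Rightarrow> real ^ 'a" where
  "cut_normal E V S = ind (E \<inter> S) - ind (V \<inter> S)"

lemma cut_normal_root_vertex:
  assumes "bipartite_graph E V G"
    and "is_splitting E V S T"
    and "directed_splitting E V G S T"
    and "ev \<in> G"
  shows "cut_normal E V S \<bullet> root_vertex ev = (if ev \<in> cut_of G S T then -1 else 0)"
proof -
  obtain e v where ev: "ev = (e, v)" by fastforce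
  have "e \<in> E" "v \<in> V" "e \<notin> V" "v \<notin> E"
    using assms(1,4) by (auto simp: ev bipartite_graph_def)
  moreover have "e \<in> S \<or> e \<in> T" "v \<in> S \<or> v \<in> T" "S \<inter> T = {}"
    using assms(1,2) by (auto simp: bipartite_graph_def is_splitting_def)
  moreover have "e \<in> S \<Longrightarrow> v \<in> S"
    using assms(3,4) calculation by (force simp: ev directed_splitting_def)
  ultimately show ?thesis
    using assms(4) by (auto simp: ev cut_normal_def inner_root_vertex cut_of_def)
qed

theorem lemma3p5:
  fixes E V S T :: "'a::finite set" and G :: "('a \<times> 'a) set"
  assumes "bipartite_graph E V G"
    and "is_splitting E V S T"
    and "directed_splitting E V G S T"
    and "cut_of G S T \<noteq> {}"
  shows "\<exists>a b. supporting_hyperplane a b (root_polytope G) \<and>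
           (\<forall>ev \<in> cut_of G S T. a \<bullet> root_vertex ev \<noteq> b) \<and>
           (\<forall>ev \<in> G - cut_of G S T. a \<bullet> root_vertex ev = b)"
proof -
  let ?a = "cut_normal E V S"
  have on_vertex: "ev \<in> G \<Longrightarrow> ?a \<bullet> root_vertex ev = (if ev \<in> cut_of G S T then -1 else 0)" for ev
    using cut_normal_root_vertex[OF assms(1-3)] .
  have cut_sub: "cut_of G S T \<subseteq> G"
    by (auto simp: cut_of_def)
  obtain c where c: "c \<in> cut_of G S T"
    using assms(4) by blast
  have "?a \<noteq> 0"
    using on_vertex[of c] c cut_sub by auto
  moreover have "\<forall>x \<in> root_polytope G. ?a \<bullet> x \<le> 0"
    using root_polytope_halfspace_le[of G ?a 0] on_vertex by fastforce
  ultimately have "supporting_hyperplane ?a 0 (root_polytope G)"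
    by (simp add: supporting_hyperplane_def)
  moreover have "\<forall>ev \<in> cut_of G S T. ?a \<bullet> root_vertex ev \<noteq> 0"
    using on_vertex cut_sub by auto
  moreover have "\<forall>ev \<in> G - cut_of G S T. ?a \<bullet> root_vertex ev = 0"
    using on_vertex by auto
  ultimately show ?thesis
    by blast
qed

end
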